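(* For every even integer $n\ge4$, $\mu_n$-almost every choice function $\eta\in\mathscr{C}_n$ is random.
   Context: Let $\mathcal{A}_n=\{1,\dots,5n-6\}$, $\mathcal{A}_n^m$ the words of length $m$ over $\mathcal{A}_n$ ($\mathcal{A}_n^0=\{\varepsilon\}$), $\mathcal{A}_n^*=\bigcup_{m\ge0}\mathcal{A}_n^m$, $\mathcal{A}_n^{\mathbb{N}}$ the infinite words; for a word $w=i_1i_2\cdots$, $w(j)=i_1\cdots i_j$. For $u\in\mathcal{A}_n^j$ and $m\ge j$, $\mathcal{A}^m_{n,u}=\{v\in\mathcal{A}_n^m:v(j)=u\}$. $\nu_n$ is the probability measure on $\mathcal{A}_n^{\mathbb{N}}$ with $\nu_n(\{\tau:\tau(|u|)=u\})=(5n-6)^{-|u|}$ for all $u\in\mathcal{A}_n^*$. $\mathscr{C}_n$ is the set of choice functions $\eta:\mathcal{A}_n^*\to\{1,2\}$, i.e. $\{1,2\}^{\mathcal{A}_n^*}$, and $\mu_n$ is the product probability measure on it under which the values $\eta(u)$, $u\in\mathcal{A}_n^*$, are independent and each equals $1$ or $2$ with probability $1/2$. A choice function $\eta$ is random if for $\nu_n$-a.e. $w=i_1i_2\cdots\in\mathcal{A}_n^{\mathbb{N}}$ the following holds: for every $N\in\mathbb{N}$ and every integer $k\ge0$ there is an integer $\ell\ge N$ such that (R1) $\eta\equiv1$ on $\bigcup_{j=0}^{k-1}\mathcal{A}^{\ell+j}_{n,w(\ell)}$ and $\eta\equiv2$ on $\bigcup_{j=0}^{2N+k-1}\mathcal{A}^{\ell-N+j}_{n,w(\ell-N)}\setminus\bigcup_{j=0}^{k-1}\mathcal{A}^{\ell+j}_{n,w(\ell)}$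 (the first union being empty when $k=0$), and (R2) $i_{\ell-N+1}>4n-4$. *)

theory Defs
  imports "HOL-Probability.Probability"
begin

text \<open>Alphabet A_n = {1,...,5n-6}; finite words are lists over it, infinite words are
  sequences nat => nat (w 0 is the first letter i_1).\<close>

definition alph :: "nat \<Rightarrow> nat set" where
  "alph n = {1..5*n-6}"

definition pref :: "(nat \<Rightarrow> nat) \<Rightarrow> nat \<Rightarrow> nat list" where
  "pref w j = map w [0..<j]"

definition cyl :: "nat \<Rightarrow> nat \<Rightarrow> nat list \<Rightarrow> nat list set" where
  "cyl n m u = {v. set v \<subseteq> alph n \<and> length v = m \<and> take (length u) v = u}"

definition nu :: "nat \<Rightarrow> (nat \<Rightarrow> nat) measure" where
  "nu n = PiM UNIV (\<lambda>_. uniform_count_measure (alph n))"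

definition mu :: "nat \<Rightarrow> (nat list \<Rightarrow> nat) measure" where
  "mu n = PiM (lists (alph n)) (\<lambda>_. uniform_count_measure {1,2})"

definition random_choice :: "nat \<Rightarrow> (nat list \<Rightarrow> nat) \<Rightarrow> bool" where
  "random_choice n \<eta> \<longleftrightarrow>
     (AE w in nu n. \<forall>N\<ge>1. \<forall>k::nat. \<exists>l\<ge>N.
        (\<forall>j<k. \<forall>v\<in>cyl n (l+j) (pref w l). \<eta> v = 1) \<and>
        (\<forall>v \<in> (\<Union>j<2*N+k. cyl n (l-N+j) (pref w (l-N))) - (\<Union>j<k. cyl n (l+j) (pref w l)).
            \<eta> v = 2) \<and>
        w (l-N) > 4*n-4)"

end

theory Submission
  imports Defs
begin

text \<open>Fix \<open>N \<ge> 1\<close>, \<open>k\<close> and put \<open>L = 2N + k\<close>. Condition (R1) at level \<open>l = mL + N\<close>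
  prescribes \<open>\<eta>\<close> on a window of words extending \<open>w(mL)\<close> with lengths in \<open>[mL, (m+1)L)\<close>.
  For distinct \<open>m\<close> these windows are disjoint and of uniformly bounded size, so under \<open>\<mu>\<^sub>n\<close> the
  events that \<open>\<eta>\<close> shows the pattern at level \<open>mL + N\<close> are independent with probability bounded
  away from 0; hence almost surely one of them occurs along any infinite set of \<open>m\<close>.
  The same independence argument for the letters of \<open>w\<close> shows that \<open>\<nu>\<^sub>n\<close>-almost surely
  the \<open>(mL + 1)\<close>-st letter of \<open>w\<close> exceeds \<open>4n - 4\<close> for infinitely many \<open>m\<close>, which
  gives (R2). Fubini swaps the two almost-sure quantifiers, and countably many choices of \<open>N\<close>
  and \<open>k\<close> are handled at once.\<close>

lemma (in prob_space) prob_INT_indep_events_eq_0: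
  assumes indep: "indep_events C Z" and Z: "infinite Z"
    and p: "\<And>m. m \<in> Z \<Longrightarrow> prob (C m) \<le> p" "p < 1"
  shows "prob (\<Inter>m\<in>Z. C m) = 0"
proof -
  have C: "C m \<in> events" if "m \<in> Z" for m
    using indep that by (auto simp: indep_events_def)
  have "0 \<le> p"
  proof -
    obtain m where "m \<in> Z" using infinite_imp_nonempty[OF Z] by blast
    then show ?thesis using p(1) measure_nonneg order_trans by metis
  qed
  have bound: "prob (\<Inter>m\<in>Z. C m) \<le> p ^ K" for K
  proof -
    obtain J where J: "J \<subseteq> Z" "finite J" "card J = Suc K"
      using infinite_arbitrarily_large[OF Z] by blast
    then have "J \<noteq> {}" by auto
    have "(\<Inter>m\<in>J. C m) \<in> events"
      using J \<open>J \<noteq> {}\<close> C by (intro sets.finite_INT) auto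
    then have "prob (\<Inter>m\<in>Z. C m) \<le> prob (\<Inter>m\<in>J. C m)"
      using J \<open>J \<noteq> {}\<close> by (intro finite_measure_mono) auto
    also have "\<dots> = (\<Prod>m\<in>J. prob (C m))"
      using indep J \<open>J \<noteq> {}\<close> unfolding indep_events_def by blast
    also have "\<dots> \<le> (\<Prod>m\<in>J. p)"
      using J(1) p(1) by (intro prod_mono) auto
    also have "\<dots> = p * p ^ K"
      using J(3) by simp
    also have "\<dots> \<le> p ^ K"
      using \<open>0 \<le> p\<close> p(2) by (intro mult_left_le_one_le) auto
    finally show ?thesis .
  qed
  have "prob (\<Inter>m\<in>Z. C m) \<le> 0"
  proof (rule LIMSEQ_le_const)
    show "(\<lambda>K. p ^ K) \<longlonglongrightarrow> 0"
      using \<open>0 \<le> p\<close> p(2) by (intro LIMSEQ_power_zero) simp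
  qed (use bound in blast)
  then show ?thesis
    using measure_nonneg[of M] by (simp add: antisym)
qed

lemma (in product_prob_space) indep_vars_coordinates:
  assumes "I \<noteq> {}"
  shows "P.indep_vars M (\<lambda>i x. x i) I"
proof (subst P.indep_vars_iff_distr_eq_PiM'[OF assms])
  show "\<And>i. i \<in> I \<Longrightarrow> (\<lambda>x. x i) \<in> measurable (Pi\<^sub>M I M) (M i)"
    by (rule measurable_component_singleton)
  have "distr (Pi\<^sub>M I M) (Pi\<^sub>M I M) (\<lambda>x. restrict (\<lambda>i. x i) I) =
      distr (Pi\<^sub>M I M) (Pi\<^sub>M I M) (\<lambda>x. x)"
    by (rule distr_cong) (auto simp: space_PiM)
  also have "\<dots> = Pi\<^sub>M I M"
    by (rule distr_id)
  also have "\<dots> = (\<Pi>\<^sub>M i\<in>I. distr (Pi\<^sub>M I M) (M i) (\<lambda>x. x i))"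
    by (rule PiM_cong) (auto simp: PiM_component)
  finally show "distr (Pi\<^sub>M I M) (Pi\<^sub>M I M) (\<lambda>x. restrict (\<lambda>i. x i) I) =
      (\<Pi>\<^sub>M i\<in>I. distr (Pi\<^sub>M I M) (M i) (\<lambda>x. x i))" .
qed

lemma sets_PiM_Collect_box:
  assumes "finite J" "J \<subseteq> I" "\<And>i. i \<in> J \<Longrightarrow> X i \<in> sets (M i)"
  shows "{x \<in> space (Pi\<^sub>M I M). \<forall>i\<in>J. x i \<in> X i} \<in> sets (Pi\<^sub>M I M)"
proof -
  have "Measurable.pred (Pi\<^sub>M I M) (\<lambda>x. \<forall>i\<in>J. x i \<in> X i)"
    using assms
    by (intro pred_intros_finite(3)) (auto intro!: pred_sets2[OF _ measurable_component_singleton])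
  then show ?thesis
    by (simp add: pred_def)
qed

lemma pred_uniform_count_measure: "Measurable.pred (uniform_count_measure A) P"
  by (simp add: measurable_cong_sets[OF sets_uniform_count_measure_count_space refl])

lemma pred_PiM_uniform_count_measure_component:
  "i \<in> I \<Longrightarrow> Measurable.pred (Pi\<^sub>M I (\<lambda>_. uniform_count_measure A)) (\<lambda>x. P (x i))"
  by (rule measurable_compose[OF measurable_component_singleton[of i I] pred_uniform_count_measure])

lemma (in product_prob_space) AE_exists_box:
  fixes Z :: "'j::countable set"
  assumes Z: "infinite Z"
    and S: "disjoint_family_on S Z" "\<And>m. m \<in> Z \<Longrightarrow> finite (S m)" "\<And>m. m \<in> Z \<Longrightarrow> S m \<subseteq> I"
    and X: "\<And>m i. m \<in> Z \<Longrightarrow> i \<in> S m \<Longrightarrow> X m i \<in> sets (M i)"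
    and q: "0 < q" "\<And>m. m \<in> Z \<Longrightarrow> q \<le> (\<Prod>i\<in>S m. measure (M i) (X m i))"
  shows "AE x in Pi\<^sub>M I M. \<exists>m\<in>Z. \<forall>i\<in>S m. x i \<in> X m i"
proof (cases "I = {}")
  case True
  then show ?thesis
    using S(3) infinite_imp_nonempty[OF Z] by auto
next
  case False
  define box where "box m = {x \<in> space (Pi\<^sub>M I M). \<forall>i\<in>S m. x i \<in> X m i}" for m
  define C where "C m = {x \<in> space (Pi\<^sub>M I M). \<not> (\<forall>i\<in>S m. x i \<in> X m i)}" for m
  have box_sets: "box m \<in> P.events" if "m \<in> Z" for m
    unfolding box_def using S X that by (intro sets_PiM_Collect_box) auto
  have "P.indep_vars (\<lambda>m. Pi\<^sub>M (S m) M) (\<lambda>m x. restrict x (S m)) Z"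
    using P.indep_vars_restrict[OF indep_vars_coordinates[OF False], of Z S] S by simp
  then have "P.indep_events (\<lambda>m. {x \<in> space (Pi\<^sub>M I M). \<not> (\<forall>i\<in>S m. restrict x (S m) i \<in> X m i)}) Z"
  proof (rule P.indep_eventsI_indep_vars)
    show "{y \<in> space (Pi\<^sub>M (S m) M). \<not> (\<forall>i\<in>S m. y i \<in> X m i)} \<in> sets (Pi\<^sub>M (S m) M)"
      if "m \<in> Z" for m
      using S(2) X that by (intro sets.sets_Collect_neg sets_PiM_Collect_box) auto
  qed
  then have indep: "P.indep_events C Z"
    unfolding C_def by simp
  have C_eq: "C m = space (Pi\<^sub>M I M) - box m" for m
    by (auto simp: C_def box_def)
  have prob_C: "P.prob (C m) \<le> 1 - q" if "m \<in> Z" for m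
  proof -
    have "P.prob (box m) = (\<Prod>i\<in>S m. measure (M i) (X m i))"
      using S X that emeasure_PiM_Collect[of "S m" "X m"]
      by (simp add: box_def P.emeasure_eq_measure M.emeasure_eq_measure prod_ennreal measure_nonneg prod_nonneg)
    then show ?thesis
      using q(2)[OF that] box_sets[OF that] by (simp add: C_eq P.prob_compl)
  qed
  have "P.prob (\<Inter>m\<in>Z. C m) = 0"
    using q(1) prob_C by (intro P.prob_INT_indep_events_eq_0[OF indep Z, of "1 - q"]) auto
  moreover have "(\<Inter>m\<in>Z. C m) \<in> P.events"
    using box_sets infinite_imp_nonempty[OF Z] by (intro sets.countable_INT') (auto simp: C_eq)
  ultimately show ?thesis
    by (intro AE_I[where N="\<Inter>m\<in>Z. C m"]) (auto simp: C_def P.emeasure_eq_measure)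
qed

lemma length_pref [simp]: "length (pref w l) = l"
  by (simp add: pref_def)

lemma take_pref: "a \<le> b \<Longrightarrow> take a (pref w b) = pref w a"
  by (simp add: pref_def take_map)

lemma finite_cyl: "finite (cyl n m u)"
proof (rule finite_subset)
  show "cyl n m u \<subseteq> {xs. set xs \<subseteq> alph n \<and> length xs = m}"
    by (auto simp: cyl_def)
  show "finite {xs. set xs \<subseteq> alph n \<and> length xs = m}"
    by (rule finite_lists_length_eq) (simp add: alph_def)
qed

text \<open>Condition (R1) depends on \<open>w\<close> only through the prefix \<open>u = w(l)\<close>, so it is stated for \<open>u\<close>.\<close>

definition pattern_core :: "nat \<Rightarrow> nat \<Rightarrow> nat list \<Rightarrow> nat list set" where
  "pattern_core n k u = (\<Union>j<k. cyl n (length u + j) u)"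

definition pattern_window :: "nat \<Rightarrow> nat \<Rightarrow> nat \<Rightarrow> nat list \<Rightarrow> nat list set" where
  "pattern_window n N k u = (\<Union>j<2*N+k. cyl n (length u - N + j) (take (length u - N) u))"

definition has_pattern :: "nat \<Rightarrow> nat \<Rightarrow> nat \<Rightarrow> (nat list \<Rightarrow> nat) \<Rightarrow> nat list \<Rightarrow> bool" where
  "has_pattern n N k \<eta> u \<longleftrightarrow>
    (\<forall>v\<in>pattern_window n N k u. \<eta> v = (if v \<in> pattern_core n k u then 1 else 2))"

lemma pattern_core_subset_window:
  assumes "N \<le> length u"
  shows "pattern_core n k u \<subseteq> pattern_window n N k u"
proof
  fix v assume "v \<in> pattern_core n k u"
  then obtain j where j: "j < k" and v: "v \<in> cyl n (length u + j) u"
    by (auto simp: pattern_core_def)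
  have "take (length u - N) v = take (length u - N) (take (length u) v)"
    by (simp add: min_def)
  also have "\<dots> = take (length u - N) u"
    using v by (simp add: cyl_def)
  finally have "v \<in> cyl n (length u - N + (N + j)) (take (length u - N) u)"
    using v assms by (simp add: cyl_def)
  then show "v \<in> pattern_window n N k u"
    using j unfolding pattern_window_def by (intro UN_I[of "N + j"]) auto
qed

lemma has_pattern_pref_iff:
  assumes "N \<le> l"
  shows "has_pattern n N k \<eta> (pref w l) \<longleftrightarrow>
    (\<forall>j<k. \<forall>v\<in>cyl n (l+j) (pref w l). \<eta> v = 1) \<and>
    (\<forall>v \<in> (\<Union>j<2*N+k. cyl n (l-N+j) (pref w (l-N))) - (\<Union>j<k. cyl n (l+j) (pref w l)). \<eta> v = 2)"
proof -
  have core_eq: "pattern_core n k (pref w l) = (\<Union>j<k. cyl n (l+j) (pref w l))"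
    by (simp add: pattern_core_def)
  have window_eq: "pattern_window n N k (pref w l) = (\<Union>j<2*N+k. cyl n (l-N+j) (pref w (l-N)))"
    by (simp add: pattern_window_def take_pref)
  have core_ball: "(\<forall>j<k. \<forall>v\<in>cyl n (l+j) (pref w l). \<eta> v = 1) \<longleftrightarrow>
      (\<forall>v\<in>pattern_core n k (pref w l). \<eta> v = 1)"
    by (auto simp: core_eq)
  show ?thesis
    using pattern_core_subset_window[of N "pref w l" n k] assms
    unfolding has_pattern_def core_ball core_eq[symmetric] window_eq[symmetric] by auto
qed

lemma length_mem_pattern_window:
  assumes "v \<in> pattern_window n N k u"
  shows "length u - N \<le> length v" "length v < length u - N + (2*N+k)"
  using assms by (auto simp: pattern_window_def cyl_def)

lemma pattern_window_subset_lists: "pattern_window n N k u \<subseteq> lists (alph n)"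
  by (auto simp: pattern_window_def cyl_def)

lemma finite_pattern_window: "finite (pattern_window n N k u)"
  by (simp add: pattern_window_def finite_cyl)

lemma card_pattern_window_le:
  "card (pattern_window n N k u) \<le> card {xs. set xs \<subseteq> alph n \<and> length xs \<le> 2*N+k}"
proof (rule card_inj_on_le)
  let ?a = "length u - N"
  have prefix: "take ?a v = take ?a u" if "v \<in> pattern_window n N k u" for v
    using that by (auto simp: pattern_window_def cyl_def)
  show "inj_on (drop ?a) (pattern_window n N k u)"
    by (metis (no_types, lifting) append_take_drop_id inj_onI prefix)
  show "drop ?a ` pattern_window n N k u \<subseteq> {xs. set xs \<subseteq> alph n \<and> length xs \<le> 2*N+k}"
    using pattern_window_subset_lists length_mem_pattern_window by (fastforce dest: in_set_dropD)
  show "finite {xs. set xs \<subseteq> alph n \<and> length xs \<le> 2*N+k}"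
    by (rule finite_lists_length_le) (simp add: alph_def)
qed

lemma AE_nu_frequently_large_letter:
  fixes f :: "nat \<Rightarrow> nat"
  assumes n: "3 \<le> n" and f: "inj f"
  shows "AE w in nu n. \<exists>\<^sub>\<infinity>m. 4*n-4 < w (f m)"
proof -
  define H where "H = {a \<in> alph n. 4*n-4 < a}"
  have A: "finite (alph n)" "alph n \<noteq> {}"
    using n by (auto simp: alph_def)
  have "5*n-6 \<in> H"
    using n by (auto simp: H_def alph_def)
  then have "card H \<noteq> 0"
    using A(1) by (auto simp: H_def)
  then have q: "1 / card (alph n) \<le> measure (uniform_count_measure (alph n)) H"
    by (simp add: H_def measure_uniform_count_measure[OF A(1)] divide_right_mono)
  interpret product_prob_space "\<lambda>_::nat. uniform_count_measure (alph n)" UNIV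
    by (rule product_prob_spaceI) (rule prob_space_uniform_count_measure[OF A])
  have "AE w in nu n. \<exists>m\<ge>m0. 4*n-4 < w (f m)" for m0
  proof -
    have "AE w in nu n. \<exists>m\<in>{m0..}. \<forall>i\<in>{f m}. w i \<in> H"
      unfolding nu_def
    proof (rule AE_exists_box)
      show "disjoint_family_on (\<lambda>m. {f m}) {m0..}"
        using f by (auto simp: disjoint_family_on_def inj_eq)
    qed (use q A infinite_Ici in \<open>auto simp: sets_uniform_count_measure H_def\<close>)
    then show ?thesis
      by (rule eventually_mono) (auto simp: H_def)
  qed
  then show ?thesis
    by (simp add: INFM_nat_le AE_all_countable)
qed

lemma AE_mu_has_pattern:
  fixes Z :: "nat set"
  assumes "infinite Z"
  shows "AE \<eta> in mu n. \<exists>m\<in>Z. has_pattern n N k \<eta> (pref w (m * (2*N+k) + N))"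
proof -
  define L where "L = 2*N+k"
  define u where "u m = pref w (m * L + N)" for m
  define C where "C = card {xs. set xs \<subseteq> alph n \<and> length xs \<le> L}"
  interpret product_prob_space "\<lambda>_::nat list. uniform_count_measure {1::nat, 2}" "lists (alph n)"
    by (rule product_prob_spaceI) (rule prob_space_uniform_count_measure; auto)
  have "AE \<eta> in mu n. \<exists>m\<in>Z. \<forall>v\<in>pattern_window n N k (u m).
      \<eta> v \<in> {if v \<in> pattern_core n k (u m) then 1 else 2}"
    unfolding mu_def
  proof (rule AE_exists_box)
    show "disjoint_family_on (\<lambda>m. pattern_window n N k (u m)) Z"
      unfolding disjoint_family_on_def
    proof (intro ballI impI)
      fix m m' :: nat assume "m \<noteq> m'"
      have "length v div L = m" if "v \<in> pattern_window n N k (u m)" for v m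
        using length_mem_pattern_window[OF that] by (intro div_nat_eqI) (auto simp: u_def L_def algebra_simps)
      then show "pattern_window n N k (u m) \<inter> pattern_window n N k (u m') = {}"
        using \<open>m \<noteq> m'\<close> by blast
    qed
    show "(1/2) ^ C \<le> (\<Prod>v\<in>pattern_window n N k (u m).
        measure (uniform_count_measure {1::nat, 2}) {if v \<in> pattern_core n k (u m) then 1 else 2})"
      for m
    proof -
      have "(1/2::real) ^ C \<le> (1/2) ^ card (pattern_window n N k (u m))"
        using card_pattern_window_le by (auto simp: C_def L_def intro!: power_decreasing)
      then show ?thesis
        by (simp add: measure_uniform_count_measure)
    qed
  qed (use assms pattern_window_subset_lists finite_pattern_window in \<open>auto simp: sets_uniform_count_measure\<close>)
  then show ?thesis
    by (rule eventually_mono) (auto simp: has_pattern_def u_def L_def)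
qed

lemma prob_space_nu: "2 \<le> n \<Longrightarrow> prob_space (nu n)"
  unfolding nu_def by (intro prob_space_PiM prob_space_uniform_count_measure) (auto simp: alph_def)

lemma prob_space_mu: "prob_space (mu n)"
  unfolding mu_def by (intro prob_space_PiM prob_space_uniform_count_measure) auto

lemma pred_nu_letter [measurable]: "Measurable.pred (nu n) (\<lambda>w. P (w i))"
  unfolding nu_def by (rule pred_PiM_uniform_count_measure_component) simp

lemma pred_nu_pref_eq [measurable]: "Measurable.pred (nu n) (\<lambda>w. pref w l = u)"
proof -
  have "(\<lambda>w. pref w l = u) = (\<lambda>w. length u = l \<and> (\<forall>i\<in>{..<l}. w i = u ! i))"
    by (auto simp: pref_def list_eq_iff_nth_eq)
  then show ?thesis
    by (simp only:) measurable
qed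

lemma pred_mu_has_pattern [measurable]: "Measurable.pred (mu n) (\<lambda>\<eta>. has_pattern n N k \<eta> u)"
  unfolding has_pattern_def mu_def
proof (intro pred_intros_finite(3) finite_pattern_window)
  fix v assume "v \<in> pattern_window n N k u"
  then have "v \<in> lists (alph n)"
    using pattern_window_subset_lists by blast
  then show "Measurable.pred (Pi\<^sub>M (lists (alph n)) (\<lambda>_. uniform_count_measure {1, 2}))
      (\<lambda>\<eta>. \<eta> v = (if v \<in> pattern_core n k u then 1 else 2))"
    by (rule pred_PiM_uniform_count_measure_component)
qed

lemma AE_mu_AE_nu_has_pattern:
  assumes n: "3 \<le> n" and N: "1 \<le> N"
  shows "AE \<eta> in mu n. AE w in nu n. \<exists>l\<ge>N. has_pattern n N k \<eta> (pref w l) \<and> 4*n-4 < w (l-N)"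
proof -
  define L where "L = 2*N+k"
  \<comment> \<open>quantifying over the prefix \<open>u\<close> makes \<open>Q\<close> a countable union of measurable rectangles\<close>
  define Q where "Q \<eta> w \<longleftrightarrow>
      (\<exists>m. \<exists>u. 4*n-4 < w (m*L) \<and> pref w (m*L+N) = u \<and> has_pattern n N k \<eta> u)" for \<eta> w
  interpret mu: prob_space "mu n" by (rule prob_space_mu)
  interpret nu: prob_space "nu n" using n by (intro prob_space_nu) simp
  interpret pair_sigma_finite "mu n" "nu n" ..
  have "AE w in nu n. AE \<eta> in mu n. Q \<eta> w"
    using AE_nu_frequently_large_letter[OF n, of "\<lambda>m. m*L"]
  proof (rule eventually_mono)
    fix w assume "\<exists>\<^sub>\<infinity>m. 4*n-4 < w (m*L)"
    then have "infinite {m. 4*n-4 < w (m*L)}"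
      by (simp add: Inf_many_def)
    from AE_mu_has_pattern[OF this] show "AE \<eta> in mu n. Q \<eta> w"
      by (rule eventually_mono) (auto simp: Q_def L_def)
  next
    show "inj (\<lambda>m. m * L)"
      using N by (auto simp: L_def inj_def)
  qed
  moreover have "{z \<in> space (mu n \<Otimes>\<^sub>M nu n). Q (fst z) (snd z)} \<in> sets (mu n \<Otimes>\<^sub>M nu n)"
    unfolding Q_def by measurable
  ultimately have "AE \<eta> in mu n. AE w in nu n. Q \<eta> w"
    by (simp add: AE_commute)
  then show ?thesis
  proof (rule eventually_mono, elim eventually_mono)
    fix \<eta> w assume "Q \<eta> w"
    then obtain m where "4*n-4 < w (m*L)" "has_pattern n N k \<eta> (pref w (m*L+N))"
      by (auto simp: Q_def)
    then show "\<exists>l\<ge>N. has_pattern n N k \<eta> (pref w l) \<and> 4*n-4 < w (l-N)"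
      by (intro exI[of _ "m*L+N"]) auto
  qed
qed

lemma random_choice_iff_has_pattern:
  "random_choice n \<eta> \<longleftrightarrow>
    (AE w in nu n. \<forall>N\<ge>1. \<forall>k. \<exists>l\<ge>N. has_pattern n N k \<eta> (pref w l) \<and> 4*n-4 < w (l-N))"
  unfolding random_choice_def by (simp add: has_pattern_pref_iff cong: conj_cong)

theorem proposition7p1:
  fixes n :: nat
  assumes "even n" and "n \<ge> 4"
  shows "AE \<eta> in mu n. random_choice n \<eta>"
proof -
  have "AE \<eta> in mu n. AE w in nu n. 1 \<le> N \<longrightarrow>
      (\<exists>l\<ge>N. has_pattern n N k \<eta> (pref w l) \<and> 4*n-4 < w (l-N))" for N k
  proof (cases "1 \<le> N")
    case True
    with AE_mu_AE_nu_has_pattern[of n N k] \<open>n \<ge> 4\<close> show ?thesis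
      by simp
  qed simp
  then show ?thesis
    by (simp add: random_choice_iff_has_pattern AE_all_countable)
qed

end
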